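(* Let $G_1$ and $G_2$ be two vertex-disjoint simple connected graphs with $|V(G_1)|=n_1$, $|V(G_2)|=n_2$, $|E(G_1)|=m_1$, $|E(G_2)|=m_2$. Then the vertex S-join $G_1\dot{\vee}_S G_2$ satisfies \[ F(G_1\dot{\vee}_S G_2)=F(G_1)+F(G_2)+3n_2M_1(G_1)+3n_1M_1(G_2)+6m_1n_2^{2}+6m_2n_1^{2}+n_1n_2(n_1^2+n_2^2)+8m_1 . \]
   Context: For a simple graph $G$ and $v\in V(G)$, $d_G(v)$ is the degree of $v$. The first Zagreb index is $M_1(G)=\sum_{v\in V(G)}d_G(v)^2$ and the F-index (forgotten topological index) is $F(G)=\sum_{v\in V(G)}d_G(v)^3$. The subdivision graph $S(G)$ is obtained from $G$ by inserting a new vertex into each edge of $G$ (replacing each edge by a path of length 2); let $I(G)$ denote the set of these inserted vertices, so $V(S(G))=V(G)\cup I(G)$. The vertex S-join $G_1\dot{\vee}_S G_2$ is the graph obtained from $S(G_1)$ and $G_2$ (taken vertex-disjoint) by joining each vertex of $V(G_1)$ to every vertex of $G_2$ by an edge. *)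

theory Defs
  imports Main
begin

definition simple_graph :: "'a set \<Rightarrow> 'a set set \<Rightarrow> bool" where
  "simple_graph V E \<longleftrightarrow> finite V \<and> (\<forall>e\<in>E. e \<subseteq> V \<and> card e = 2)"

definition adj :: "'a set set \<Rightarrow> 'a \<Rightarrow> 'a \<Rightarrow> bool" where
  "adj E u v \<longleftrightarrow> {u, v} \<in> E"

definition connected_graph :: "'a set \<Rightarrow> 'a set set \<Rightarrow> bool" where
  "connected_graph V E \<longleftrightarrow> V \<noteq> {} \<and> (\<forall>u\<in>V. \<forall>v\<in>V. (adj E)\<^sup>*\<^sup>* u v)"

definition degree :: "'a set set \<Rightarrow> 'a \<Rightarrow> nat" where
  "degree E v = card {e \<in> E. v \<in> e}"

definition zagreb1 :: "'a set \<Rightarrow> 'a set set \<Rightarrow> nat" where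
  "zagreb1 V E = (\<Sum>v\<in>V. degree E v ^ 2)"

definition findex :: "'a set \<Rightarrow> 'a set set \<Rightarrow> nat" where
  "findex V E = (\<Sum>v\<in>V. degree E v ^ 3)"

text \<open>Vertex S-join. Vertices: Inl (Inl v) for v in V(G1), Inl (Inr e) for the
  vertex inserted into edge e of G1, Inr w for w in V(G2).\<close>
definition sjoin_vertices :: "'a set \<Rightarrow> 'a set set \<Rightarrow> 'b set \<Rightarrow> (('a + 'a set) + 'b) set" where
  "sjoin_vertices V1 E1 V2 = (Inl \<circ> Inl) ` V1 \<union> (Inl \<circ> Inr) ` E1 \<union> Inr ` V2"

definition sjoin_edges :: "'a set \<Rightarrow> 'a set set \<Rightarrow> 'b set \<Rightarrow> 'b set set
    \<Rightarrow> (('a + 'a set) + 'b) set set" where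
  "sjoin_edges V1 E1 V2 E2 =
     {{Inl (Inl v), Inl (Inr e)} | v e. e \<in> E1 \<and> v \<in> e}
     \<union> (\<lambda>e. Inr ` e) ` E2
     \<union> {{Inl (Inl v), Inr w} | v w. v \<in> V1 \<and> w \<in> V2}"

end

theory Submission
  imports Defs
begin

text \<open>In the S-join a vertex of \<open>G\<^sub>1\<close> gains \<open>n\<^sub>2\<close> neighbours, a vertex of \<open>G\<^sub>2\<close> gains \<open>n\<^sub>1\<close>,
  and every subdivision vertex has degree 2. Summing the cubes of these degrees and expanding
  \<open>(d + k)\<^sup>3\<close> gives the F-index, \<open>k\<close> times the first Zagreb index, \<open>k\<^sup>2\<close> times the degree sum
  \<open>2m\<close> and \<open>n k\<^sup>3\<close>; the \<open>m\<^sub>1\<close> subdivision vertices contribute \<open>8 m\<^sub>1\<close>.\<close>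

lemma simple_graph_finite_edges:
  assumes "simple_graph V E"
  shows "finite E"
  using assms unfolding simple_graph_def
  by (metis Pow_iff finite_Pow_iff finite_subset subsetI)

lemma sum_degree_eq_twice_card_edges:
  assumes "simple_graph V E"
  shows "(\<Sum>v\<in>V. degree E v) = 2 * card E"
proof -
  have fV: "finite V" using assms by (simp add: simple_graph_def)
  have fE: "finite E" using assms by (rule simple_graph_finite_edges)
  have "(\<Sum>v\<in>V. degree E v) = (\<Sum>v\<in>V. \<Sum>e\<in>E. if v \<in> e then 1 else 0)"
    unfolding degree_def using fE by (simp add: sum.If_cases Int_def)
  also have "\<dots> = (\<Sum>e\<in>E. \<Sum>v\<in>V. if v \<in> e then 1 else 0)" by (rule sum.swap)
  also have "\<dots> = (\<Sum>e\<in>E. card e)"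
  proof (rule sum.cong[OF refl])
    fix e assume "e \<in> E"
    then have "V \<inter> e = e" using assms by (auto simp: simple_graph_def)
    then show "(\<Sum>v\<in>V. if v \<in> e then 1 else 0) = card e"
      using fV by (simp add: sum.If_cases)
  qed
  also have "\<dots> = (\<Sum>e\<in>E. 2)"
    using assms by (intro sum.cong) (auto simp: simple_graph_def)
  finally show ?thesis by simp
qed

lemma sum_degree_plus_const_cube:
  assumes "simple_graph V E"
  shows "(\<Sum>v\<in>V. (degree E v + k) ^ 3)
       = findex V E + 3 * k * zagreb1 V E + 6 * card E * k ^ 2 + card V * k ^ 3"
proof -
  have cube: "(d + k) ^ 3 = d ^ 3 + 3 * k * d ^ 2 + 3 * k ^ 2 * d + k ^ 3" for d :: nat
    by (simp add: power3_eq_cube power2_eq_square algebra_simps)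
  have "(\<Sum>v\<in>V. (degree E v + k) ^ 3)
      = findex V E + 3 * k * zagreb1 V E + 3 * k ^ 2 * (\<Sum>v\<in>V. degree E v) + card V * k ^ 3"
    by (simp add: cube sum.distrib sum_distrib_left findex_def zagreb1_def)
  then show ?thesis by (simp add: sum_degree_eq_twice_card_edges[OF assms])
qed

lemma sum_sjoin_vertices:
  assumes "finite V1" "finite E1" "finite V2"
  shows "(\<Sum>x\<in>sjoin_vertices V1 E1 V2. f x)
       = (\<Sum>v\<in>V1. f (Inl (Inl v))) + (\<Sum>e\<in>E1. f (Inl (Inr e))) + (\<Sum>w\<in>V2. f (Inr w))"
proof -
  have "(\<Sum>x\<in>sjoin_vertices V1 E1 V2. f x)
      = sum f ((Inl \<circ> Inl) ` V1) + sum f ((Inl \<circ> Inr) ` E1) + sum f (Inr ` V2)"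
    unfolding sjoin_vertices_def using assms by (subst sum.union_disjoint, auto)+
  then show ?thesis by (simp add: sum.reindex inj_on_def)
qed

lemma degree_sjoin_left:
  fixes E1 :: "'a set set" and E2 :: "'b set set"
  assumes "v \<in> V1" "finite E1" "finite V2"
  shows "degree (sjoin_edges V1 E1 V2 E2) (Inl (Inl v)) = degree E1 v + card V2"
proof -
  let ?subdiv = "(\<lambda>e. {Inl (Inl v), Inl (Inr e)}) ` {e\<in>E1. v \<in> e} :: (('a + 'a set) + 'b) set set"
  let ?join = "(\<lambda>w. {Inl (Inl v), Inr w}) ` V2 :: (('a + 'a set) + 'b) set set"
  have incident: "{x \<in> sjoin_edges V1 E1 V2 E2. Inl (Inl v) \<in> x} = ?subdiv \<union> ?join"
    using assms(1) unfolding sjoin_edges_def by (auto simp: doubleton_eq_iff)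
  have "card (?subdiv \<union> ?join) = card ?subdiv + card ?join"
    using assms by (intro card_Un_disjoint) (auto simp: doubleton_eq_iff)
  moreover have "card ?subdiv = degree E1 v"
    unfolding degree_def by (rule card_image) (auto simp: inj_on_def doubleton_eq_iff)
  moreover have "card ?join = card V2"
    by (rule card_image) (auto simp: inj_on_def doubleton_eq_iff)
  ultimately show ?thesis unfolding degree_def[of "sjoin_edges V1 E1 V2 E2"] incident by simp
qed

lemma degree_sjoin_subdivision:
  fixes E1 :: "'a set set" and E2 :: "'b set set"
  assumes "e \<in> E1" "simple_graph V1 E1"
  shows "degree (sjoin_edges V1 E1 V2 E2) (Inl (Inr e)) = 2"
proof -
  have incident: "{x \<in> sjoin_edges V1 E1 V2 E2. Inl (Inr e) \<in> x}
      = (\<lambda>v. {Inl (Inl v), Inl (Inr e)}) ` e"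
    using assms(1) unfolding sjoin_edges_def by (auto simp: doubleton_eq_iff)
  have "card ((\<lambda>v. {Inl (Inl v), Inl (Inr e)}) ` e :: (('a + 'a set) + 'b) set set) = card e"
    by (rule card_image) (auto simp: inj_on_def doubleton_eq_iff)
  also have "card e = 2" using assms by (simp add: simple_graph_def)
  finally show ?thesis unfolding degree_def incident .
qed

lemma degree_sjoin_right:
  fixes E1 :: "'a set set" and E2 :: "'b set set"
  assumes "w \<in> V2" "finite V1" "finite E2"
  shows "degree (sjoin_edges V1 E1 V2 E2) (Inr w) = degree E2 w + card V1"
proof -
  let ?own = "(\<lambda>e. Inr ` e) ` {e\<in>E2. w \<in> e} :: (('a + 'a set) + 'b) set set"
  let ?join = "(\<lambda>v. {Inl (Inl v), Inr w}) ` V1 :: (('a + 'a set) + 'b) set set"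
  have incident: "{x \<in> sjoin_edges V1 E1 V2 E2. Inr w \<in> x} = ?own \<union> ?join"
    using assms(1) unfolding sjoin_edges_def by (auto simp: doubleton_eq_iff)
  have "card (?own \<union> ?join) = card ?own + card ?join"
    using assms by (intro card_Un_disjoint) (auto simp: doubleton_eq_iff)
  moreover have "card ?own = degree E2 w"
    unfolding degree_def by (rule card_image) (auto simp: inj_on_def inj_image_eq_iff)
  moreover have "card ?join = card V1"
    by (rule card_image) (auto simp: inj_on_def doubleton_eq_iff)
  ultimately show ?thesis unfolding degree_def[of "sjoin_edges V1 E1 V2 E2"] incident by simp
qed

theorem theorem1:
  fixes V1 :: "'a set" and E1 :: "'a set set" and V2 :: "'b set" and E2 :: "'b set set"
    and n1 n2 m1 m2 :: nat
  assumes "simple_graph V1 E1" and "connected_graph V1 E1"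
    and "simple_graph V2 E2" and "connected_graph V2 E2"
    and "card V1 = n1" and "card V2 = n2" and "card E1 = m1" and "card E2 = m2"
  shows "findex (sjoin_vertices V1 E1 V2) (sjoin_edges V1 E1 V2 E2)
       = findex V1 E1 + findex V2 E2 + 3 * n2 * zagreb1 V1 E1 + 3 * n1 * zagreb1 V2 E2
         + 6 * m1 * n2 ^ 2 + 6 * m2 * n1 ^ 2 + n1 * n2 * (n1 ^ 2 + n2 ^ 2) + 8 * m1"
proof -
  note G1 = assms(1) and G2 = assms(3)
  have fV1: "finite V1" and fV2: "finite V2" using G1 G2 by (auto simp: simple_graph_def)
  have fE1: "finite E1" and fE2: "finite E2" using G1 G2 by (auto intro: simple_graph_finite_edges)
  have "findex (sjoin_vertices V1 E1 V2) (sjoin_edges V1 E1 V2 E2)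
      = (\<Sum>v\<in>V1. (degree E1 v + n2) ^ 3) + (\<Sum>e\<in>E1. 2 ^ 3) + (\<Sum>w\<in>V2. (degree E2 w + n1) ^ 3)"
    unfolding findex_def sum_sjoin_vertices[OF fV1 fE1 fV2] using assms(5,6) G1 fV1 fV2 fE1 fE2
    by (simp add: degree_sjoin_left degree_sjoin_subdivision degree_sjoin_right)
  then show ?thesis
    using sum_degree_plus_const_cube[OF G1, of n2] sum_degree_plus_const_cube[OF G2, of n1] assms(5-8)
    by (simp add: algebra_simps power2_eq_square power3_eq_cube)
qed

end
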